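(* Let $G=(V,E)$ be a finite graph with special vertex $i$, symmetric edge weights $w_E$ (with $w_E(u,v)=0$ for $uv\notin E$) and vertex weights $w_V$ (nonnegative, not identically zero). Assume $G$ and $G-i$ are each positively connected. Let $f_i$ be a solution of $$\min_{\|g\|_w=1,\ g(i)=0}\ \sum_{jk\in E} w_E(j,k)\,(g(k)-g(j))^2,$$ with sign chosen so that $f_i$ is positive on $V\setminus\{i\}$. Then for every $u\in V\setminus\{i\}$ there exists $u'\in N(u)$ (possibly $u'=i$) with $f_i(u')\le f_i(u)$. Moreover, if $w_V(u)>0$, such $u'$ can be chosen with $f_i(u')<f_i(u)$.
   Context: $\|g\|_w=\sqrt{\sum_{u\in V}w_V(u)g(u)^2}$; each edge is counted once. A weighted graph is positively connected if any two vertices are joined by a path of positive-weight edges; $G-i$ is $G$ with $i$ deleted. Edges of weight zero are regarded as deleted (they do not affect the optimization problem), so $N(u)$ is the set of vertices joined to $u$ by an edge of positive weight. A solution that is positive at some vertex is positive on all of $V\setminus\{i\}$, and the paper always takes this sign. *)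

theory Defs
  imports Complex_Main
begin

text \<open>Weighted graph on a finite vertex set V; edge weights are a function
  wE :: 'a => 'a => real (weight 0 = no edge).\<close>

definition pos_edges :: "'a set \<Rightarrow> ('a \<Rightarrow> 'a \<Rightarrow> real) \<Rightarrow> ('a \<times> 'a) set" where
  "pos_edges V wE = {(x, y). x \<in> V \<and> y \<in> V \<and> wE x y > 0}"

definition pos_connected :: "'a set \<Rightarrow> ('a \<Rightarrow> 'a \<Rightarrow> real) \<Rightarrow> bool" where
  "pos_connected V wE \<longleftrightarrow> (\<forall>a\<in>V. \<forall>b\<in>V. (a, b) \<in> (pos_edges V wE)\<^sup>*)"

definition nbrs :: "'a set \<Rightarrow> ('a \<Rightarrow> 'a \<Rightarrow> real) \<Rightarrow> 'a \<Rightarrow> 'a set" where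
  "nbrs V wE u = {v \<in> V. wE u v > 0}"

definition wnorm :: "'a set \<Rightarrow> ('a \<Rightarrow> real) \<Rightarrow> ('a \<Rightarrow> real) \<Rightarrow> real" where
  "wnorm V wV g = sqrt (\<Sum>u\<in>V. wV u * (g u)\<^sup>2)"

text \<open>Dirichlet energy, each edge counted once (ordered double sum halved;
  weights are symmetric).\<close>
definition energy :: "'a set \<Rightarrow> ('a \<Rightarrow> 'a \<Rightarrow> real) \<Rightarrow> ('a \<Rightarrow> real) \<Rightarrow> real" where
  "energy V wE g = (1/2) * (\<Sum>j\<in>V. \<Sum>k\<in>V. wE j k * (g k - g j)\<^sup>2)"

definition admissible :: "'a set \<Rightarrow> ('a \<Rightarrow> real) \<Rightarrow> 'a \<Rightarrow> ('a \<Rightarrow> real) \<Rightarrow> bool" where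
  "admissible V wV i g \<longleftrightarrow> wnorm V wV g = 1 \<and> g i = 0"

definition is_solution ::
  "'a set \<Rightarrow> ('a \<Rightarrow> 'a \<Rightarrow> real) \<Rightarrow> ('a \<Rightarrow> real) \<Rightarrow> 'a \<Rightarrow> ('a \<Rightarrow> real) \<Rightarrow> bool" where
  "is_solution V wE wV i f \<longleftrightarrow> admissible V wV i f \<and>
     (\<forall>g. admissible V wV i g \<longrightarrow> energy V wE f \<le> energy V wE g)"

end

theory Submission
  imports Defs
begin

text \<open>Perturbing a minimiser f at a single vertex u \<noteq> i by f u \<mapsto> f u + t with t > 0 and
  renormalising yields an admissible function, so the energy cannot drop. Comparing the first
  order terms in t gives the inequality
  E wV(u) f(u) + sum over v of wE(u,v) (f(v) - f(u)) \<le> 0, where E is the energy of f,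
  which says that f(u) is at least a weighted mean of f over N(u). Connectivity makes N(u)
  nonempty and E positive; if all neighbours had f > f(u) (or f \<ge> f(u) and wV(u) > 0) the
  left side would be positive.\<close>

lemma energy_nonneg:
  assumes "\<And>u v. wE u v \<ge> 0"
  shows "energy V wE g \<ge> 0"
  unfolding energy_def using assms by (intro mult_nonneg_nonneg sum_nonneg) auto

lemma energy_eq_0_imp_const:
  assumes "finite V" and "\<And>u v. wE u v \<ge> 0" and "energy V wE g = 0"
    and "(a, b) \<in> (pos_edges V wE)\<^sup>*"
  shows "g a = g b"
proof -
  have "\<forall>j\<in>V. \<forall>k\<in>V. wE j k * (g k - g j)\<^sup>2 = 0"
    using assms(1-3) unfolding energy_def by (simp add: sum_nonneg_eq_0_iff sum_nonneg)
  then have "g x = g y" if "(x, y) \<in> pos_edges V wE" for x y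
    using that unfolding pos_edges_def by fastforce
  with assms(4) show ?thesis
    by (induction rule: rtrancl_induct) auto
qed

lemma energy_cmult:
  "energy V wE (\<lambda>w. c * g w) = c\<^sup>2 * energy V wE g"
proof -
  have scaled: "wE j k * (c * g k - c * g j)\<^sup>2 = c\<^sup>2 * (wE j k * (g k - g j)\<^sup>2)" for j k
    by (simp add: power2_eq_square algebra_simps)
  show ?thesis
    unfolding energy_def scaled by (simp add: sum_distrib_left)
qed

lemma wnorm_cmult:
  "wnorm V wV (\<lambda>w. c * g w) = \<bar>c\<bar> * wnorm V wV g"
proof -
  have "(\<Sum>w\<in>V. wV w * (c * g w)\<^sup>2) = c\<^sup>2 * (\<Sum>w\<in>V. wV w * (g w)\<^sup>2)"
    by (simp add: power_mult_distrib sum_distrib_left algebra_simps)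
  then show ?thesis
    unfolding wnorm_def by (simp add: real_sqrt_mult)
qed

lemma solution_energy_le_Rayleigh:
  assumes "is_solution V wE wV i f" and "g i = 0" and "wnorm V wV g > 0"
  shows "energy V wE f * (wnorm V wV g)\<^sup>2 \<le> energy V wE g"
proof -
  define n where "n = wnorm V wV g"
  have "admissible V wV i (\<lambda>w. (1 / n) * g w)"
    using assms(2,3) wnorm_cmult[of V wV "1 / n" g] unfolding admissible_def n_def by simp
  then have "energy V wE f \<le> (1 / n)\<^sup>2 * energy V wE g"
    using assms(1) unfolding is_solution_def by (metis energy_cmult)
  then show ?thesis
    using assms(3) unfolding n_def by (simp add: power_divide field_simps)
qed

lemma solution_energy_pos:
  assumes "finite V" and "\<And>u v. wE u v \<ge> 0" and "pos_connected V wE"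
    and "is_solution V wE wV i f" and "i \<in> V"
  shows "energy V wE f > 0"
proof (rule ccontr)
  assume "\<not> energy V wE f > 0"
  then have "energy V wE f = 0"
    using energy_nonneg[of wE V f, OF assms(2)] by linarith
  have "f i = 0" and "wnorm V wV f = 1"
    using assms(4) unfolding is_solution_def admissible_def by auto
  have "f w = f i" if "w \<in> V" for w
    using energy_eq_0_imp_const[OF assms(1,2) \<open>energy V wE f = 0\<close>] assms(3,5) that
    unfolding pos_connected_def by blast
  then have "wnorm V wV f = 0"
    unfolding wnorm_def using \<open>f i = 0\<close> by (simp add: sum.neutral)
  with \<open>wnorm V wV f = 1\<close> show False
    by simp
qed

lemma sum_weighted_sq_fun_upd:
  fixes g wV :: "'a \<Rightarrow> real"
  assumes "finite V" and "u \<in> V"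
  shows "(\<Sum>w\<in>V. wV w * ((g(u := g u + t)) w)\<^sup>2)
       = (\<Sum>w\<in>V. wV w * (g w)\<^sup>2) + wV u * (2 * g u * t + t\<^sup>2)"
proof -
  have "(\<Sum>w\<in>V. wV w * ((g(u := g u + t)) w)\<^sup>2)
      = (\<Sum>w\<in>V. wV w * (g w)\<^sup>2 + (if w = u then wV u * (2 * g u * t + t\<^sup>2) else 0))"
    by (rule sum.cong) (auto simp: power2_eq_square algebra_simps)
  with assms show ?thesis
    by (simp add: sum.distrib)
qed

lemma energy_fun_upd:
  assumes "finite V" and "u \<in> V" and sym: "\<And>x y. wE x y = wE y x" and "wE u u = 0"
  shows "energy V wE (g(u := g u + t))
       = energy V wE g + (\<Sum>v\<in>V. wE u v) * t\<^sup>2 - 2 * (\<Sum>v\<in>V. wE u v * (g v - g u)) * t"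
proof -
  define h where "h = g(u := g u + t)"
  define \<delta> where "\<delta> v = wE u v * ((g v - g u - t)\<^sup>2 - (g v - g u)\<^sup>2)" for v
  have split: "wE j k * (h k - h j)\<^sup>2 = wE j k * (g k - g j)\<^sup>2
        + ((if j = u then \<delta> k else 0) + (if k = u then \<delta> j else 0))" for j k
    unfolding h_def \<delta>_def using assms(4) sym[of j u]
    by (cases "j = u"; cases "k = u") (auto simp: power2_eq_square algebra_simps)
  have "(\<Sum>j\<in>V. \<Sum>k\<in>V. (if j = u then \<delta> k else 0)) = (\<Sum>j\<in>V. if j = u then sum \<delta> V else 0)"
    by (rule sum.cong) auto
  then have "(\<Sum>j\<in>V. \<Sum>k\<in>V. (if j = u then \<delta> k else 0)) = sum \<delta> V"
    using assms(1,2) by simp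
  moreover have "(\<Sum>j\<in>V. \<Sum>k\<in>V. (if k = u then \<delta> j else 0)) = sum \<delta> V"
    using assms(1,2) by simp
  ultimately have "(\<Sum>j\<in>V. \<Sum>k\<in>V. wE j k * (h k - h j)\<^sup>2)
      = (\<Sum>j\<in>V. \<Sum>k\<in>V. wE j k * (g k - g j)\<^sup>2) + 2 * sum \<delta> V"
    unfolding split by (simp add: sum.distrib)
  moreover have "sum \<delta> V = (\<Sum>v\<in>V. wE u v) * t\<^sup>2 - 2 * (\<Sum>v\<in>V. wE u v * (g v - g u)) * t"
    unfolding \<delta>_def
    by (simp add: power2_eq_square algebra_simps sum_distrib_left sum_distrib_right
        sum_subtractf[symmetric] sum.distrib[symmetric])
  ultimately show ?thesis
    unfolding energy_def h_def by (simp add: algebra_simps)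
qed

lemma nonpos_if_le_linear:
  fixes K A :: real
  assumes "\<And>t. t > 0 \<Longrightarrow> K \<le> A * t"
  shows "K \<le> 0"
proof (rule field_le_epsilon)
  fix e :: real assume "e > 0"
  have "A * (e / (\<bar>A\<bar> + 1)) \<le> \<bar>A\<bar> * (e / (\<bar>A\<bar> + 1))"
    using \<open>e > 0\<close> by (intro mult_right_mono) auto
  also have "\<dots> \<le> e"
    using \<open>e > 0\<close> by (simp add: field_simps)
  finally show "K \<le> 0 + e"
    using assms[of "e / (\<bar>A\<bar> + 1)"] \<open>e > 0\<close> by simp
qed

lemma solution_first_variation:
  assumes "finite V" and "\<And>x y. wE x y = wE y x" and "wE u u = 0"
    and sol: "is_solution V wE wV i f" and "u \<in> V" and "u \<noteq> i"
    and "f u \<ge> 0" and "wV u \<ge> 0"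
  shows "energy V wE f * wV u * f u + (\<Sum>v\<in>V. wE u v * (f v - f u)) \<le> 0"
proof -
  define E where "E = energy V wE f"
  define C where "C = (\<Sum>v\<in>V. wE u v * (f v - f u))"
  define S where "S = (\<Sum>v\<in>V. wE u v)"
  have "(\<Sum>w\<in>V. wV w * (f w)\<^sup>2) = 1" and "f i = 0"
    using sol unfolding is_solution_def admissible_def wnorm_def by auto
  have "2 * (E * wV u * f u + C) \<le> (S - E * wV u) * t" if "t > 0" for t
  proof -
    define g where "g = f(u := f u + t)"
    define N where "N = 1 + wV u * (2 * f u * t + t\<^sup>2)"
    have "N \<ge> 1"
      unfolding N_def using assms(7,8) \<open>t > 0\<close> by simp
    have "(\<Sum>w\<in>V. wV w * (g w)\<^sup>2) = N"
      using sum_weighted_sq_fun_upd[OF assms(1,5), of wV f t] \<open>(\<Sum>w\<in>V. wV w * (f w)\<^sup>2) = 1\<close>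
      unfolding g_def N_def by simp
    then have "(wnorm V wV g)\<^sup>2 = N" and "wnorm V wV g > 0"
      using \<open>N \<ge> 1\<close> unfolding wnorm_def by auto
    moreover have "g i = 0"
      using \<open>f i = 0\<close> assms(6) unfolding g_def by simp
    ultimately have "E * N \<le> energy V wE g"
      using solution_energy_le_Rayleigh[OF sol, of g] unfolding E_def by simp
    also have "\<dots> = E + S * t\<^sup>2 - 2 * C * t"
      unfolding g_def E_def S_def C_def using energy_fun_upd[where wE = wE, OF assms(1,5,2,3)] by simp
    finally have "t * (2 * (E * wV u * f u + C)) \<le> t * ((S - E * wV u) * t)"
      unfolding N_def by (simp add: power2_eq_square algebra_simps)
    then show ?thesis
      using \<open>t > 0\<close> by (rule mult_left_le_imp_le)
  qed
  then have "2 * (E * wV u * f u + C) \<le> 0"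
    by (rule nonpos_if_le_linear)
  then show ?thesis
    unfolding E_def C_def by simp
qed

lemma sum_over_nbrs:
  assumes "finite V" and "\<And>v. wE u v \<ge> 0"
  shows "(\<Sum>v\<in>V. wE u v * h v) = (\<Sum>v\<in>nbrs V wE u. wE u v * h v)"
proof -
  have "wE u v = 0" if "v \<in> V - nbrs V wE u" for v
    using that assms(2)[of v] unfolding nbrs_def by auto
  then show ?thesis
    using assms(1) by (intro sum.mono_neutral_right) (auto simp: nbrs_def)
qed

lemma nbrs_nonempty:
  assumes "pos_connected V wE" and "u \<in> V" and "v \<in> V" and "u \<noteq> v"
  shows "nbrs V wE u \<noteq> {}"
proof -
  have "(u, v) \<in> (pos_edges V wE)\<^sup>*"
    using assms(1-3) unfolding pos_connected_def by blast
  then obtain y where "(u, y) \<in> pos_edges V wE"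
    using assms(4) by (metis converse_rtranclE)
  then show ?thesis
    unfolding pos_edges_def nbrs_def by auto
qed

lemma ex_le_if_weighted_diff_sum_nonpos:
  fixes w f :: "'a \<Rightarrow> real"
  assumes "finite N" and "N \<noteq> {}" and "\<And>v. v \<in> N \<Longrightarrow> w v > 0"
    and "(\<Sum>v\<in>N. w v * (f v - x)) \<le> 0"
  shows "\<exists>v\<in>N. f v \<le> x"
proof (rule ccontr)
  assume "\<not> (\<exists>v\<in>N. f v \<le> x)"
  then have "w v * (f v - x) > 0" if "v \<in> N" for v
    using that assms(3)[OF that] by auto
  then have "(\<Sum>v\<in>N. w v * (f v - x)) > 0"
    by (rule sum_pos[OF assms(1,2)])
  with assms(4) show False
    by simp
qed

lemma ex_less_if_weighted_diff_sum_neg: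
  fixes w f :: "'a \<Rightarrow> real"
  assumes "\<And>v. v \<in> N \<Longrightarrow> w v \<ge> 0" and "(\<Sum>v\<in>N. w v * (f v - x)) < 0"
  shows "\<exists>v\<in>N. f v < x"
proof (rule ccontr)
  assume "\<not> (\<exists>v\<in>N. f v < x)"
  then have "w v * (f v - x) \<ge> 0" if "v \<in> N" for v
    using that assms(1)[OF that] by auto
  then have "(\<Sum>v\<in>N. w v * (f v - x)) \<ge> 0"
    by (rule sum_nonneg)
  with assms(2) show False
    by simp
qed

theorem theorem8:
  fixes V :: "'a set" and i :: 'a
    and wE :: "'a \<Rightarrow> 'a \<Rightarrow> real" and wV :: "'a \<Rightarrow> real" and f :: "'a \<Rightarrow> real"
  assumes finV: "finite V" and iV: "i \<in> V"
    and wE_sym: "\<And>u v. wE u v = wE v u"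
    and wE_nonneg: "\<And>u v. wE u v \<ge> 0"
    and no_loops: "\<And>u. wE u u = 0"
    and wV_nonneg: "\<And>u. u \<in> V \<Longrightarrow> wV u \<ge> 0"
    and wV_nonzero: "\<exists>u\<in>V. wV u \<noteq> 0"
    and conn: "pos_connected V wE"
    and conn_del: "pos_connected (V - {i}) wE"
    and sol: "is_solution V wE wV i f"
    and pos: "\<And>u. u \<in> V - {i} \<Longrightarrow> f u > 0"
  shows "\<forall>u \<in> V - {i}.
           (\<exists>u' \<in> nbrs V wE u. f u' \<le> f u) \<and>
           (wV u > 0 \<longrightarrow> (\<exists>u' \<in> nbrs V wE u. f u' < f u))"
proof (intro ballI conjI impI)
  fix u assume u: "u \<in> V - {i}"
  define N where "N = nbrs V wE u"
  have "finite N" and "N \<noteq> {}"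
    using finV nbrs_nonempty[OF conn, of u i] u iV unfolding N_def nbrs_def by auto
  have edge: "\<And>v. v \<in> N \<Longrightarrow> wE u v > 0"
    unfolding N_def nbrs_def by simp
  have "f u > 0" and "wV u \<ge> 0"
    using pos wV_nonneg u by auto
  have E_pos: "energy V wE f > 0"
    by (rule solution_energy_pos[OF finV wE_nonneg conn sol iV])
  have variation: "energy V wE f * wV u * f u + (\<Sum>v\<in>N. wE u v * (f v - f u)) \<le> 0"
    using solution_first_variation[OF finV wE_sym no_loops sol, of u] u \<open>f u > 0\<close> \<open>wV u \<ge> 0\<close>
      sum_over_nbrs[where wE = wE and u = u and h = "\<lambda>v. f v - f u", OF finV wE_nonneg]
    unfolding N_def by simp
  have "energy V wE f * wV u * f u \<ge> 0"
    using E_pos \<open>wV u \<ge> 0\<close> \<open>f u > 0\<close> by simp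
  with variation show "\<exists>u' \<in> nbrs V wE u. f u' \<le> f u"
    using ex_le_if_weighted_diff_sum_nonpos[OF \<open>finite N\<close> \<open>N \<noteq> {}\<close> edge]
    unfolding N_def by simp
  assume "wV u > 0"
  then have "energy V wE f * wV u * f u > 0"
    using E_pos \<open>f u > 0\<close> by simp
  with variation show "\<exists>u' \<in> nbrs V wE u. f u' < f u"
    using ex_less_if_weighted_diff_sum_neg[of N "wE u"] edge
    unfolding N_def by fastforce
qed

end
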